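(* Let $h$ be a hive all of whose flatspaces are small triangles or small rhombi, and let $G$ be its associated graph. If $h$ is a vertex (extreme point) of the polytope of all hives having the same border labels as $h$, then $G$ is acyclic (contains no cycle).
   Context: Fix $n\ge1$. Hive vertices: $H=\{(p,q)\in\mathbb{Z}^2:p,q\ge0,\ p+q\le n\}$, placed in the plane at $p(1,0)+q(1/2,\sqrt3/2)$, forming a big triangle subdivided into $n^2$ small unit triangles. A rhombus is the union of two small triangles sharing an edge; for integers $p,q\ge0$ with $p+q\le n-2$ the rhombus inequalities are $h(p+1,q)+h(p,q+1)\ge h(p,q)+h(p+1,q+1)$, $h(p+1,q)+h(p+1,q+1)\ge h(p,q+1)+h(p+2,q)$, $h(p,q+1)+h(p+1,q+1)\ge h(p+1,q)+h(p,q+2)$ (obtuse-vertex sum $\ge$ acute-vertex sum). A hive is $h:H\to\mathbb{R}$ satisfying all of them. Border $B$: vertices with $p=0$, $q=0$ or $p+q=n$; the set of hives with prescribed values on $B$ is a compact polytope. A rhombus is flat if equality holds. Flatspaces are the unions of small triangles in the classes of the equivalence relation generated by "share an edge and form a flat rhombus". Associated graph $G$ (defined when every flatspace is a small triangle or a small rhombus): $G$ has one (blue) vertex for each flatspace that is a small triangle, and one (red) vertex for each lattice edge that is a side of a flatspace; each blue vertex is joined to the three red vertices on the sides of its triangle, and for each rhombus flatspace, the red vertices on each pair of opposite sides of the rhombus are joined by an edge. *)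

theory Defs
  imports Complex_Main
begin

definition hive_vertices :: "nat \<Rightarrow> (nat \<times> nat) set" where
  "hive_vertices n = {(p, q). p + q \<le> n}"

definition hive_border :: "nat \<Rightarrow> (nat \<times> nat) set" where
  "hive_border n = {(p, q). p + q \<le> n \<and> (p = 0 \<or> q = 0 \<or> p + q = n)}"

definition is_hive :: "nat \<Rightarrow> (nat \<times> nat \<Rightarrow> real) \<Rightarrow> bool" where
  "is_hive n h \<longleftrightarrow> (\<forall>p q. p + q + 2 \<le> n \<longrightarrow>
       h (p+1, q) + h (p, q+1) \<ge> h (p, q) + h (p+1, q+1) \<and>
       h (p+1, q) + h (p+1, q+1) \<ge> h (p, q+1) + h (p+2, q) \<and>
       h (p, q+1) + h (p+1, q+1) \<ge> h (p+1, q) + h (p, q+2))"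

text \<open>The polytope of hives with the same border labels as b. Hives are functions on
  the hive vertices; they are represented as functions on nat \<times> nat that vanish
  outside the hive vertices.\<close>
definition hives_with_border :: "nat \<Rightarrow> (nat \<times> nat \<Rightarrow> real) \<Rightarrow> (nat \<times> nat \<Rightarrow> real) set" where
  "hives_with_border n b = {g. is_hive n g \<and> (\<forall>x\<in>hive_border n. g x = b x)
                                 \<and> (\<forall>x. x \<notin> hive_vertices n \<longrightarrow> g x = 0)}"

definition extreme_point_fun :: "('a \<Rightarrow> real) \<Rightarrow> ('a \<Rightarrow> real) set \<Rightarrow> bool" where
  "extreme_point_fun x S \<longleftrightarrow> x \<in> S \<and>
     (\<forall>a\<in>S. \<forall>b\<in>S. \<forall>t::real. a \<noteq> b \<and> 0 < t \<and> t < 1 \<longrightarrow>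
        x \<noteq> (\<lambda>i. (1 - t) * a i + t * b i))"

definition up_tri :: "nat \<Rightarrow> nat \<Rightarrow> (nat \<times> nat) set" where
  "up_tri p q = {(p, q), (p+1, q), (p, q+1)}"

definition down_tri :: "nat \<Rightarrow> nat \<Rightarrow> (nat \<times> nat) set" where
  "down_tri p q = {(p+1, q), (p, q+1), (p+1, q+1)}"

definition small_tris :: "nat \<Rightarrow> (nat \<times> nat) set set" where
  "small_tris n = {up_tri p q | p q. p + q + 1 \<le> n} \<union> {down_tri p q | p q. p + q + 2 \<le> n}"

text \<open>Two distinct small triangles sharing an edge form a rhombus; it is flat if the
  sum over the obtuse vertices (the shared edge) equals the sum over the acute ones.\<close>
definition flat_adj :: "nat \<Rightarrow> (nat \<times> nat \<Rightarrow> real) \<Rightarrow> (nat \<times> nat) set \<Rightarrow> (nat \<times> nat) set \<Rightarrow> bool" where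
  "flat_adj n h T1 T2 \<longleftrightarrow> T1 \<in> small_tris n \<and> T2 \<in> small_tris n \<and> card (T1 \<inter> T2) = 2 \<and>
     sum h (T1 \<inter> T2) = sum h ((T1 \<union> T2) - (T1 \<inter> T2))"

text \<open>Flatspaces: classes of the equivalence relation on small triangles generated by
  flat_adj; a flatspace is represented by the set of small triangles it is the union of.\<close>
definition flatspaces :: "nat \<Rightarrow> (nat \<times> nat \<Rightarrow> real) \<Rightarrow> (nat \<times> nat) set set set" where
  "flatspaces n h = (\<lambda>T. {T'. (T, T') \<in> {(A, B). flat_adj n h A B}\<^sup>*}) ` small_tris n"

definition is_small_triangle :: "nat \<Rightarrow> (nat \<times> nat) set set \<Rightarrow> bool" where
  "is_small_triangle n F \<longleftrightarrow> (\<exists>T\<in>small_tris n. F = {T})"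

definition is_small_rhombus :: "nat \<Rightarrow> (nat \<times> nat) set set \<Rightarrow> bool" where
  "is_small_rhombus n F \<longleftrightarrow> (\<exists>T1\<in>small_tris n. \<exists>T2\<in>small_tris n.
      card (T1 \<inter> T2) = 2 \<and> F = {T1, T2})"

definition sides :: "(nat \<times> nat) set set \<Rightarrow> (nat \<times> nat) set set" where
  "sides F = {e. card e = 2 \<and> (\<exists>T\<in>F. e \<subseteq> T) \<and>
                 \<not> (\<exists>T1\<in>F. \<exists>T2\<in>F. T1 \<noteq> T2 \<and> e \<subseteq> T1 \<inter> T2)}"

datatype gvert = Blue "(nat \<times> nat) set" | Red "(nat \<times> nat) set"

definition assoc_graph_vertices :: "nat \<Rightarrow> (nat \<times> nat \<Rightarrow> real) \<Rightarrow> gvert set" where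
  "assoc_graph_vertices n h =
     {Blue T | T. {T} \<in> flatspaces n h} \<union> {Red e | e F. F \<in> flatspaces n h \<and> e \<in> sides F}"

definition assoc_graph_edges :: "nat \<Rightarrow> (nat \<times> nat \<Rightarrow> real) \<Rightarrow> gvert set set" where
  "assoc_graph_edges n h =
     {{Blue T, Red e} | T e. {T} \<in> flatspaces n h \<and> e \<in> sides {T}} \<union>
     {{Red e1, Red e2} | e1 e2 T1 T2. {T1, T2} \<in> flatspaces n h \<and> T1 \<noteq> T2 \<and>
         e1 \<in> sides {T1, T2} \<and> e2 \<in> sides {T1, T2} \<and> e1 \<subseteq> T1 \<and> e2 \<subseteq> T2 \<and> e1 \<inter> e2 = {}}"

definition is_cycle :: "'v set set \<Rightarrow> 'v list \<Rightarrow> bool" where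
  "is_cycle E vs \<longleftrightarrow> length vs \<ge> 3 \<and> distinct vs \<and>
     (\<forall>i < length vs. {vs ! i, vs ! ((i + 1) mod length vs)} \<in> E)"

definition acyclic_graph :: "'v set set \<Rightarrow> bool" where
  "acyclic_graph E \<longleftrightarrow> \<not> (\<exists>vs. is_cycle E vs)"

end

theory Submission
  imports Defs
begin

text \<open>Suppose the associated graph of \<open>h\<close> contains a cycle. Traversing it gives a closed walk
  of small triangles: a blue vertex is its triangle, a red vertex is a crossing of that lattice
  edge, and an edge between two red vertices crosses their rhombus flatspace. Counting with sign
  how often the walk crosses each directed lattice edge gives a cocycle (the walk leaves every
  small triangle as often as it enters it) that vanishes on the border, so it has a primitive
  \<open>f\<close> vanishing on the border. The walk passes through a rhombus flatspace from one side to the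
  opposite one, so \<open>f\<close> satisfies every rhombus equality that \<open>h\<close> satisfies; and \<open>f \<noteq> 0\<close>,
  because the lattice edge of a red vertex of the cycle is crossed exactly once. Hence
  \<open>h \<plusminus> \<epsilon> f\<close> are hives with the border of \<open>h\<close> for small \<open>\<epsilon>\<close>, and \<open>h\<close> is not a vertex.\<close>

section \<open>Small triangles and their orientation\<close>

lemma small_tris_cases:
  assumes "T \<in> small_tris n"
  obtains p q where "T = up_tri p q" "p + q + 1 \<le> n"
    | p q where "T = down_tri p q" "p + q + 2 \<le> n"
  using assms unfolding small_tris_def by blast

lemma up_tri_in_small_tris: "p + q + 1 \<le> n \<Longrightarrow> up_tri p q \<in> small_tris n"
  unfolding small_tris_def by blast

lemma down_tri_in_small_tris: "p + q + 2 \<le> n \<Longrightarrow> down_tri p q \<in> small_tris n"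
  unfolding small_tris_def by blast

lemma small_tri_finite_card: "T \<in> small_tris n \<Longrightarrow> finite T \<and> card T = 3"
  by (erule small_tris_cases) (auto simp: up_tri_def down_tri_def)

definition cross3 :: "nat \<times> nat \<Rightarrow> nat \<times> nat \<Rightarrow> nat \<times> nat \<Rightarrow> real" where
  "cross3 u v z = (real (fst v) - real (fst u)) * (real (snd z) - real (snd u))
                - (real (snd v) - real (snd u)) * (real (fst z) - real (fst u))"

text \<open>For a small triangle \<open>A\<close> with vertices \<open>u \<noteq> v\<close>, \<open>orient A u v\<close> is \<open>1\<close> if \<open>u \<rightarrow> v\<close> runs
  counterclockwise around \<open>A\<close> and \<open>-1\<close> otherwise. Summing over all of \<open>A\<close> avoids naming the
  third vertex: the terms for \<open>u\<close> and \<open>v\<close> vanish.\<close>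
definition orient :: "(nat \<times> nat) set \<Rightarrow> nat \<times> nat \<Rightarrow> nat \<times> nat \<Rightarrow> real" where
  "orient A u v = (\<Sum>z\<in>A. cross3 u v z)"

lemma orient_swap: "orient A v u = - orient A u v"
  unfolding orient_def sum_negf[symmetric] by (rule sum.cong) (auto simp: cross3_def algebra_simps)

lemma orient_triangle: "distinct [u, v, z] \<Longrightarrow> orient {u, v, z} u v = cross3 u v z"
  by (simp add: orient_def cross3_def)

lemma orient_rotate: "distinct [u, v, z] \<Longrightarrow> orient {u, v, z} v z = orient {u, v, z} u v"
proof -
  assume d: "distinct [u, v, z]"
  have "orient {u, v, z} v z = orient {v, z, u} v z" by (simp add: insert_commute)
  also have "\<dots> = cross3 v z u" using d by (intro orient_triangle) auto
  also have "\<dots> = cross3 u v z" by (simp add: cross3_def algebra_simps)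
  also have "\<dots> = orient {u, v, z} u v" using d by (simp add: orient_triangle)
  finally show ?thesis .
qed

definition border_edge :: "nat \<Rightarrow> nat \<times> nat \<Rightarrow> nat \<times> nat \<Rightarrow> bool" where
  "border_edge n u v \<longleftrightarrow> (snd u = 0 \<and> snd v = 0) \<or> (fst u = 0 \<and> fst v = 0)
      \<or> (fst u + snd u = n \<and> fst v + snd v = n)"

lemma up_tri_edge_min:
  assumes "u \<noteq> v" "{u, v} \<subseteq> up_tri p q"
  shows "p = min (fst u) (fst v)" "q = min (snd u) (snd v)"
  using assms by (auto simp: up_tri_def)

lemma down_tri_edge_max:
  assumes "u \<noteq> v" "{u, v} \<subseteq> down_tri p q"
  shows "Suc p = max (fst u) (fst v)" "Suc q = max (snd u) (snd v)"
  using assms by (auto simp: down_tri_def)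

lemma up_tris_common_edge:
  "u \<noteq> v \<Longrightarrow> {u, v} \<subseteq> up_tri p q \<Longrightarrow> {u, v} \<subseteq> up_tri p' q' \<Longrightarrow> up_tri p q = up_tri p' q'"
  using up_tri_edge_min by metis

lemma down_tris_common_edge:
  "u \<noteq> v \<Longrightarrow> {u, v} \<subseteq> down_tri p q \<Longrightarrow> {u, v} \<subseteq> down_tri p' q' \<Longrightarrow> down_tri p q = down_tri p' q'"
  using down_tri_edge_max Suc_inject by metis

lemma up_down_common_edge:
  assumes "u \<noteq> v" "{u, v} \<subseteq> up_tri p q" "{u, v} \<subseteq> down_tri p' q'" "p' + q' + 2 \<le> n"
  shows "up_tri p q \<inter> down_tri p' q' = {u, v} \<and> orient (down_tri p' q') u v = - orient (up_tri p q) u v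
     \<and> \<bar>orient (up_tri p q) u v\<bar> = 1 \<and> \<not> border_edge n u v"
proof -
  have "u = (p, q) \<or> u = (Suc p, q) \<or> u = (p, Suc q)" "v = (p, q) \<or> v = (Suc p, q) \<or> v = (p, Suc q)"
    using assms(2) by (auto simp: up_tri_def)
  with assms(1,4) down_tri_edge_max[OF assms(1,3)] show ?thesis
    by (elim disjE) (auto simp: up_tri_def down_tri_def orient_def cross3_def border_edge_def)
qed

lemma small_tris_common_edge:
  assumes "A \<in> small_tris n" "B \<in> small_tris n" "A \<noteq> B" "u \<noteq> v" "{u, v} \<subseteq> A" "{u, v} \<subseteq> B"
  shows "A \<inter> B = {u, v}" "orient B u v = - orient A u v" "\<bar>orient A u v\<bar> = 1"
    "\<not> border_edge n u v"
proof -
  have "A \<inter> B = {u, v} \<and> orient B u v = - orient A u v \<and> \<bar>orient A u v\<bar> = 1 \<and> \<not> border_edge n u v"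
    using assms(1)
  proof (cases rule: small_tris_cases)
    case A: (1 p q)
    show ?thesis using assms(2)
    proof (cases rule: small_tris_cases)
      case (1 p' q')
      then show ?thesis using up_tris_common_edge[of u v p q p' q'] assms A by auto
    next
      case (2 p' q')
      then show ?thesis using up_down_common_edge[of u v p q p' q' n] assms A by auto
    qed
  next
    case A: (2 p q)
    show ?thesis using assms(2)
    proof (cases rule: small_tris_cases)
      case (1 p' q')
      then show ?thesis using up_down_common_edge[of u v p' q' p q n] assms A
        by (auto simp: Int_commute)
    next
      case (2 p' q')
      then show ?thesis using down_tris_common_edge[of u v p q p' q'] assms A by auto
    qed
  qed
  then show "A \<inter> B = {u, v}" "orient B u v = - orient A u v" "\<bar>orient A u v\<bar> = 1"
    "\<not> border_edge n u v" by auto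
qed

lemma small_tris_edge_shared_by_two:
  assumes "A \<in> small_tris n" "B \<in> small_tris n" "C \<in> small_tris n" "u \<noteq> v"
    "{u, v} \<subseteq> A" "{u, v} \<subseteq> B" "{u, v} \<subseteq> C"
  shows "A = B \<or> A = C \<or> B = C"
  using assms(1-3)
  by (elim small_tris_cases)
     (metis assms(4-7) up_tris_common_edge down_tris_common_edge)+

section \<open>Signed crossings of a closed walk of small triangles\<close>

definition crossing :: "(nat \<times> nat) set \<Rightarrow> (nat \<times> nat) set \<Rightarrow> nat \<times> nat \<Rightarrow> nat \<times> nat \<Rightarrow> real" where
  "crossing A B u v = (if A \<noteq> B \<and> A \<inter> B = {u, v} then orient A u v else 0)"

lemma crossing_swap: "crossing A B v u = - crossing A B u v"
proof -
  have "{v, u} = {u, v}" by (rule insert_commute)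
  then show ?thesis using orient_swap[of A v u] by (simp add: crossing_def)
qed

lemma crossing_side:
  assumes "A \<in> small_tris n" "B \<in> small_tris n" "T \<in> small_tris n" "A \<noteq> B" "A \<inter> B = {u, v}"
    "u \<noteq> v" "{u, v} \<subseteq> T"
  shows "crossing A B u v = orient T u v * ((if A = T then 1 else 0) - (if B = T then 1 else 0))"
proof -
  have "{u, v} \<subseteq> A" "{u, v} \<subseteq> B" using assms(5) by auto
  then have "T = A \<or> T = B"
    using small_tris_edge_shared_by_two[OF assms(1-3,6)] assms(4,7) by blast
  moreover have "crossing A B u v = orient A u v" using assms(4,5) by (simp add: crossing_def)
  moreover have "orient B u v = - orient A u v"
    using small_tris_common_edge(2)[OF assms(1,2,4,6)] \<open>{u, v} \<subseteq> A\<close> \<open>{u, v} \<subseteq> B\<close> .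
  ultimately show ?thesis using assms(4) by auto
qed

lemma crossing_triangle_boundary:
  assumes "A \<in> small_tris n" "B \<in> small_tris n" "T \<in> small_tris n" "A = B \<or> card (A \<inter> B) = 2"
    "T = {u, v, z}" "distinct [u, v, z]"
  shows "crossing A B u v + crossing A B v z + crossing A B z u
         = orient T u v * ((if A = T then 1 else 0) - (if B = T then 1 else 0))"
proof (cases "A = B")
  case True
  then show ?thesis by (simp add: crossing_def)
next
  case False
  then obtain x y where xy: "x \<noteq> y" "A \<inter> B = {x, y}"
    using assms(4) by (auto simp: card_2_iff)
  have rot: "orient T v z = orient T u v" "orient T z u = orient T u v"
    using orient_rotate[of u v z] orient_rotate[of v z u] assms(5,6) by (auto simp: insert_commute)
  have side: "crossing A B a b = orient T a b * ((if A = T then 1 else 0) - (if B = T then 1 else 0))"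
    if "{a, b} = {x, y}" "a \<noteq> b" "{a, b} \<subseteq> T" for a b
    using crossing_side[OF assms(1-3) False _ that(2,3)] xy(2) that(1) by simp
  have off: "crossing A B a b = 0" if "{a, b} \<noteq> {x, y}" for a b
    using xy(2) that by (simp add: crossing_def)
  consider "{x, y} = {u, v}" | "{x, y} = {v, z}" | "{x, y} = {z, u}" | "\<not> {x, y} \<subseteq> T"
    using assms(5) xy(1) by auto
  then show ?thesis
  proof cases
    case 1
    have "{v, z} \<noteq> {x, y}" "{z, u} \<noteq> {x, y}" using 1 assms(6) by (auto simp: doubleton_eq_iff)
    then show ?thesis using side[of u v] off 1 assms(5,6) by simp
  next
    case 2
    have "{u, v} \<noteq> {x, y}" "{z, u} \<noteq> {x, y}" using 2 assms(6) by (auto simp: doubleton_eq_iff)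
    then show ?thesis using side[of v z] off 2 rot assms(5,6) by simp
  next
    case 3
    have "{u, v} \<noteq> {x, y}" "{v, z} \<noteq> {x, y}" using 3 assms(6) by (auto simp: doubleton_eq_iff)
    moreover have "z \<noteq> u" using assms(6) by auto
    ultimately show ?thesis using side[of z u] off 3 rot assms(5) by simp
  next
    case 4
    then have "{a, b} \<noteq> {x, y}" if "{a, b} \<subseteq> T" for a b using that by auto
    moreover have "A \<noteq> T" "B \<noteq> T" using 4 xy by auto
    ultimately show ?thesis using off assms(5) by simp
  qed
qed

definition closed_walk :: "nat \<Rightarrow> (nat \<Rightarrow> (nat \<times> nat) set) \<Rightarrow> nat \<Rightarrow> bool" where
  "closed_walk n w L \<longleftrightarrow> (\<forall>j. w j \<in> small_tris n) \<and>
     (\<forall>j. w j = w (Suc j) \<or> card (w j \<inter> w (Suc j)) = 2) \<and> w L = w 0"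

definition crossings :: "(nat \<Rightarrow> (nat \<times> nat) set) \<Rightarrow> nat \<Rightarrow> nat \<times> nat \<Rightarrow> nat \<times> nat \<Rightarrow> real" where
  "crossings w L u v = (\<Sum>j<L. crossing (w j) (w (Suc j)) u v)"

lemma crossings_swap: "crossings w L v u = - crossings w L u v"
  unfolding crossings_def sum_negf[symmetric] by (intro sum.cong refl crossing_swap)

lemma sum_lessThan_shift_cyclic:
  fixes g :: "nat \<Rightarrow> 'a::cancel_comm_monoid_add"
  assumes "g L = g 0"
  shows "(\<Sum>j<L. g (Suc j)) = (\<Sum>j<L. g j)"
proof -
  have "g 0 + (\<Sum>j<L. g (Suc j)) = (\<Sum>j<Suc L. g j)" by (rule sum.lessThan_Suc_shift[symmetric])
  also have "\<dots> = g 0 + (\<Sum>j<L. g j)" using assms by (simp add: add.commute)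
  finally show ?thesis by simp
qed

text \<open>The walk leaves each small triangle as often as it enters it.\<close>
lemma crossings_cocycle:
  assumes "closed_walk n w L" "T \<in> small_tris n" "T = {u, v, z}" "distinct [u, v, z]"
  shows "crossings w L u v + crossings w L v z + crossings w L z u = 0"
proof -
  let ?I = "\<lambda>j. (if w j = T then 1 else 0) :: real"
  have "crossings w L u v + crossings w L v z + crossings w L z u
      = (\<Sum>j<L. crossing (w j) (w (Suc j)) u v + crossing (w j) (w (Suc j)) v z
                + crossing (w j) (w (Suc j)) z u)"
    by (simp add: crossings_def sum.distrib)
  also have "\<dots> = (\<Sum>j<L. orient T u v * (?I j - ?I (Suc j)))"
    using assms crossing_triangle_boundary[of _ n _ T u v z] unfolding closed_walk_def
    by (intro sum.cong) auto
  also have "\<dots> = orient T u v * ((\<Sum>j<L. ?I j) - (\<Sum>j<L. ?I (Suc j)))"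
    by (simp add: sum_distrib_left sum_subtractf right_diff_distrib)
  also have "(\<Sum>j<L. ?I (Suc j)) = (\<Sum>j<L. ?I j)"
    by (rule sum_lessThan_shift_cyclic) (use assms(1) in \<open>simp add: closed_walk_def\<close>)
  finally show ?thesis by simp
qed

lemma crossings_border_edge:
  assumes "closed_walk n w L" "border_edge n u v" "u \<noteq> v"
  shows "crossings w L u v = 0"
  unfolding crossings_def
proof (intro sum.neutral ballI)
  fix j
  have "w j \<in> small_tris n" "w (Suc j) \<in> small_tris n"
    using assms(1) by (auto simp: closed_walk_def)
  then show "crossing (w j) (w (Suc j)) u v = 0"
    using small_tris_common_edge(4)[of "w j" n "w (Suc j)" u v] assms(2,3)
    by (auto simp: crossing_def)
qed

text \<open>A primitive of the cocycle \<open>crossings\<close>, obtained by integrating along the horizontal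
  lattice lines from the left side of the hive.\<close>
definition potential :: "nat \<Rightarrow> (nat \<Rightarrow> (nat \<times> nat) set) \<Rightarrow> nat \<Rightarrow> nat \<times> nat \<Rightarrow> real" where
  "potential n w L x =
     (if fst x + snd x \<le> n then (\<Sum>i<fst x. crossings w L (i, snd x) (Suc i, snd x)) else 0)"

lemma potential_step_right:
  "Suc p + q \<le> n \<Longrightarrow> potential n w L (Suc p, q) - potential n w L (p, q) = crossings w L (p, q) (Suc p, q)"
  by (simp add: potential_def)

lemma potential_step_up:
  assumes "closed_walk n w L" "p + q + 1 \<le> n"
  shows "potential n w L (p, Suc q) - potential n w L (p, q) = crossings w L (p, q) (p, Suc q)"
  using assms(2)
proof (induction p)
  case 0
  have "crossings w L (0, q) (0, Suc q) = 0"
    by (rule crossings_border_edge[OF assms(1)]) (auto simp: border_edge_def)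
  then show ?case by (simp add: potential_def)
next
  case (Suc p)
  have up: "crossings w L (p, q) (Suc p, q) + crossings w L (Suc p, q) (p, Suc q)
      + crossings w L (p, Suc q) (p, q) = 0"
    using crossings_cocycle[OF assms(1) up_tri_in_small_tris[of p q n]] Suc.prems
    by (simp add: up_tri_def)
  have down: "crossings w L (Suc p, q) (Suc p, Suc q) + crossings w L (Suc p, Suc q) (p, Suc q)
      + crossings w L (p, Suc q) (Suc p, q) = 0"
    using crossings_cocycle[OF assms(1) down_tri_in_small_tris[of p q n]] Suc.prems
    by (simp add: down_tri_def insert_commute)
  show ?case
    using Suc potential_step_right[of p q n w L] potential_step_right[of p "Suc q" n w L]
      up down crossings_swap[of w L "(p, q)" "(p, Suc q)"]
      crossings_swap[of w L "(p, Suc q)" "(Suc p, Suc q)"] crossings_swap[of w L "(Suc p, q)" "(p, Suc q)"]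
    by simp
qed

lemma potential_step_diag:
  assumes "closed_walk n w L" "p + q + 1 \<le> n"
  shows "potential n w L (p, Suc q) - potential n w L (Suc p, q) = crossings w L (Suc p, q) (p, Suc q)"
proof -
  have "crossings w L (p, q) (Suc p, q) + crossings w L (Suc p, q) (p, Suc q)
      + crossings w L (p, Suc q) (p, q) = 0"
    using crossings_cocycle[OF assms(1) up_tri_in_small_tris[of p q n]] assms(2)
    by (simp add: up_tri_def)
  then show ?thesis
    using potential_step_right[of p q n w L] potential_step_up[OF assms]
      crossings_swap[of w L "(p, q)" "(p, Suc q)"] assms(2)
    by simp
qed

lemma exact_on_triangle:
  fixes F :: "'a \<Rightarrow> real"
  assumes antisym: "\<And>x y. D y x = - D x y"
    and "F b - F a = D a b" "F c - F a = D a c" "F c - F b = D b c"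
    and "u \<in> {a, b, c}" "v \<in> {a, b, c}"
  shows "F v - F u = D u v"
  using assms(2-6) antisym[of a b] antisym[of a c] antisym[of b c]
    antisym[of a a] antisym[of b b] antisym[of c c]
  by auto

lemma potential_diff:
  assumes "closed_walk n w L" "T \<in> small_tris n" "u \<in> T" "v \<in> T"
  shows "potential n w L v - potential n w L u = crossings w L u v"
  using assms(2)
proof (cases rule: small_tris_cases)
  case (1 p q)
  show ?thesis
  proof (rule exact_on_triangle[OF crossings_swap])
    show "potential n w L (Suc p, q) - potential n w L (p, q) = crossings w L (p, q) (Suc p, q)"
      using 1 by (intro potential_step_right) simp
    show "potential n w L (p, Suc q) - potential n w L (p, q) = crossings w L (p, q) (p, Suc q)"
      using 1 by (intro potential_step_up assms(1))
    show "potential n w L (p, Suc q) - potential n w L (Suc p, q) = crossings w L (Suc p, q) (p, Suc q)"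
      using 1 by (intro potential_step_diag assms(1))
  qed (use assms(3,4) 1 in \<open>auto simp: up_tri_def\<close>)
next
  case (2 p q)
  show ?thesis
  proof (rule exact_on_triangle[OF crossings_swap])
    show "potential n w L (p, Suc q) - potential n w L (Suc p, q) = crossings w L (Suc p, q) (p, Suc q)"
      using 2 by (intro potential_step_diag assms(1)) simp
    show "potential n w L (Suc p, Suc q) - potential n w L (Suc p, q)
        = crossings w L (Suc p, q) (Suc p, Suc q)"
      using 2 by (intro potential_step_up assms(1)) simp
    show "potential n w L (Suc p, Suc q) - potential n w L (p, Suc q)
        = crossings w L (p, Suc q) (Suc p, Suc q)"
      using 2 by (intro potential_step_right) simp
  qed (use assms(3,4) 2 in \<open>auto simp: down_tri_def\<close>)
qed

lemma potential_outside: "x \<notin> hive_vertices n \<Longrightarrow> potential n w L x = 0"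
  by (cases x) (simp add: potential_def hive_vertices_def)

lemma potential_border:
  assumes "closed_walk n w L" "x \<in> hive_border n"
  shows "potential n w L x = 0"
proof -
  have bottom: "potential n w L (p, 0) = 0" if "p \<le> n" for p
    using that assms(1) by (auto simp: potential_def border_edge_def intro!: sum.neutral crossings_border_edge)
  have hyp: "potential n w L (p, q) = 0" if "p + q = n" for p q
    using that
  proof (induction q arbitrary: p)
    case 0
    then show ?case using bottom by simp
  next
    case (Suc q)
    have "crossings w L (Suc p, q) (p, Suc q) = 0"
      using Suc.prems by (intro crossings_border_edge[OF assms(1)]) (auto simp: border_edge_def)
    then show ?case
      using potential_step_diag[OF assms(1), of p q] Suc by simp
  qed
  obtain p q where "x = (p, q)" "p + q \<le> n" "p = 0 \<or> q = 0 \<or> p + q = n"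
    using assms(2) by (auto simp: hive_border_def)
  then show ?thesis using bottom hyp by (auto simp: potential_def)
qed

section \<open>Flatspaces and the associated graph\<close>

definition flat_rel :: "nat \<Rightarrow> (nat \<times> nat \<Rightarrow> real) \<Rightarrow> ((nat \<times> nat) set \<times> (nat \<times> nat) set) set" where
  "flat_rel n h = {(A, B). flat_adj n h A B}"

lemma sym_flat_rel: "sym (flat_rel n h)"
  unfolding sym_def flat_rel_def flat_adj_def by (auto simp: Int_commute Un_commute)

lemma flatspaces_eq: "flatspaces n h = (\<lambda>T. {T'. (T, T') \<in> (flat_rel n h)\<^sup>*}) ` small_tris n"
  unfolding flatspaces_def flat_rel_def by simp

lemma flatspace_small_tri: "F \<in> flatspaces n h \<Longrightarrow> T \<in> F \<Longrightarrow> T \<in> small_tris n"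
proof -
  have "(A, B) \<in> (flat_rel n h)\<^sup>* \<Longrightarrow> A \<in> small_tris n \<Longrightarrow> B \<in> small_tris n" for A B
    by (induction rule: rtrancl_induct) (auto simp: flat_rel_def flat_adj_def)
  then show "F \<in> flatspaces n h \<Longrightarrow> T \<in> F \<Longrightarrow> T \<in> small_tris n"
    unfolding flatspaces_eq by blast
qed

lemma flatspace_eq_class:
  assumes "F \<in> flatspaces n h" "T \<in> F"
  shows "F = {T'. (T, T') \<in> (flat_rel n h)\<^sup>*}"
proof -
  obtain T0 where F: "F = {T'. (T0, T') \<in> (flat_rel n h)\<^sup>*}"
    using assms(1) unfolding flatspaces_eq by blast
  then have "(T0, T) \<in> (flat_rel n h)\<^sup>*" using assms(2) by blast
  moreover then have "(T, T0) \<in> (flat_rel n h)\<^sup>*"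
    using sym_rtrancl[OF sym_flat_rel] by (auto simp: sym_def)
  ultimately show ?thesis unfolding F by (auto intro: rtrancl_trans)
qed

lemma flatspace_unique:
  "F1 \<in> flatspaces n h \<Longrightarrow> F2 \<in> flatspaces n h \<Longrightarrow> T \<in> F1 \<Longrightarrow> T \<in> F2 \<Longrightarrow> F1 = F2"
  using flatspace_eq_class by metis

lemma singleton_flatspace_rhombus:
  assumes "{T} \<in> flatspaces n h" "{T, C} \<in> flatspaces n h"
  shows "C = T"
  using flatspace_unique[OF assms, of T] by auto

definition small_flatspaces :: "nat \<Rightarrow> (nat \<times> nat \<Rightarrow> real) \<Rightarrow> bool" where
  "small_flatspaces n h \<longleftrightarrow> (\<forall>F\<in>flatspaces n h. is_small_triangle n F \<or> is_small_rhombus n F)"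

lemma flat_adj_flatspace:
  assumes "small_flatspaces n h" "flat_adj n h T1 T2" "T1 \<noteq> T2"
  shows "{T1, T2} \<in> flatspaces n h"
proof -
  let ?F = "{T'. (T1, T') \<in> (flat_rel n h)\<^sup>*}"
  have F: "?F \<in> flatspaces n h"
    using assms(2) unfolding flatspaces_eq flat_adj_def by blast
  have T12: "T1 \<in> ?F" "T2 \<in> ?F" using assms(2) by (auto simp: flat_rel_def)
  have "is_small_triangle n ?F \<or> is_small_rhombus n ?F"
    using assms(1) F unfolding small_flatspaces_def by blast
  then obtain X Y where "?F = {X, Y}"
    unfolding is_small_triangle_def is_small_rhombus_def by (metis insert_absorb2)
  then have "?F = {T1, T2}" using T12 assms(3) by auto
  then show ?thesis using F by simp
qed

lemma rhombus_flatspace_card_inter: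
  assumes "small_flatspaces n h" "{A, B} \<in> flatspaces n h" "A \<noteq> B"
  shows "card (A \<inter> B) = 2"
proof -
  have "is_small_triangle n {A, B} \<or> is_small_rhombus n {A, B}"
    using assms(1,2) unfolding small_flatspaces_def by blast
  then obtain T1 T2 where "card (T1 \<inter> T2) = 2" "{A, B} = {T1, T2}"
    using assms(3) by (auto simp: is_small_triangle_def is_small_rhombus_def)
  then show ?thesis using assms(3) by (auto simp: doubleton_eq_iff Int_commute)
qed

lemma sides_card: "e \<in> sides F \<Longrightarrow> card e = 2"
  by (simp add: sides_def)

lemma sides_singleton_subset: "e \<in> sides {T} \<Longrightarrow> e \<subseteq> T"
  by (auto simp: sides_def)

lemma rhombus_sides:
  assumes "distinct [a1, a2, o1, o2]"
  shows "{a1, o1} \<in> sides {{a1, o1, o2}, {a2, o1, o2}}" "{a2, o2} \<in> sides {{a1, o1, o2}, {a2, o1, o2}}"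
  using assms by (auto simp: sides_def)

text \<open>A walk traverses the edge from \<open>x\<close> to \<open>y\<close> of the associated graph by stepping from the small
  triangle \<open>A\<close> to the small triangle \<open>B\<close>: for an edge between a triangle flatspace and one of
  its sides both are that triangle, for an edge between opposite sides of a rhombus flatspace
  they are the two halves of the rhombus.\<close>
definition realises :: "nat \<Rightarrow> (nat \<times> nat \<Rightarrow> real) \<Rightarrow> gvert \<Rightarrow> gvert \<Rightarrow>
    (nat \<times> nat) set \<Rightarrow> (nat \<times> nat) set \<Rightarrow> bool" where
  "realises n h x y A B \<longleftrightarrow>
     (\<exists>e. {A} \<in> flatspaces n h \<and> B = A \<and> e \<in> sides {A} \<and>
        (x = Blue A \<and> y = Red e \<or> x = Red e \<and> y = Blue A))
   \<or> (\<exists>e1 e2. {A, B} \<in> flatspaces n h \<and> A \<noteq> B \<and> e1 \<in> sides {A, B} \<and> e2 \<in> sides {A, B}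
        \<and> e1 \<subseteq> A \<and> e2 \<subseteq> B \<and> e1 \<inter> e2 = {} \<and> x = Red e1 \<and> y = Red e2)"

lemma assoc_graph_edge_realised:
  assumes "{x, y} \<in> assoc_graph_edges n h"
  obtains A B where "realises n h x y A B"
  using assms unfolding assoc_graph_edges_def
proof (elim UnE CollectE exE conjE)
  fix T e
  assume "{x, y} = {Blue T, Red e}" "{T} \<in> flatspaces n h" "e \<in> sides {T}"
  then have "realises n h x y T T" unfolding realises_def by (auto simp: doubleton_eq_iff)
  then show thesis by (rule that)
next
  fix e1 e2 T1 T2
  assume a: "{x, y} = {Red e1, Red e2}" "{T1, T2} \<in> flatspaces n h" "T1 \<noteq> T2"
    "e1 \<in> sides {T1, T2}" "e2 \<in> sides {T1, T2}" "e1 \<subseteq> T1" "e2 \<subseteq> T2" "e1 \<inter> e2 = {}"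
  consider "x = Red e1" "y = Red e2" | "x = Red e2" "y = Red e1"
    using a(1) by (auto simp: doubleton_eq_iff)
  then show thesis
  proof cases
    case 1
    then have "realises n h x y T1 T2" using a unfolding realises_def by blast
    then show thesis by (rule that)
  next
    case 2
    have "{T2, T1} = {T1, T2}" by auto
    then have "realises n h x y T2 T1" using a 2 unfolding realises_def by (metis Int_commute)
    then show thesis by (rule that)
  qed
qed

lemma realises_small_tris:
  assumes "small_flatspaces n h" "realises n h x y A B"
  shows "A \<in> small_tris n" "B \<in> small_tris n" "A = B \<or> card (A \<inter> B) = 2"
  using assms(2) flatspace_small_tri[of _ n h] rhombus_flatspace_card_inter[OF assms(1)]
  unfolding realises_def by blast+

lemma realises_Blue_source: "realises n h (Blue T) y A B \<Longrightarrow> A = T"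
  unfolding realises_def by auto

lemma realises_Blue_target: "realises n h x (Blue T) A B \<Longrightarrow> B = T"
  unfolding realises_def by auto

lemma realises_Red_source: "realises n h (Red e) y A B \<Longrightarrow> e \<subseteq> A \<and> card e = 2"
  unfolding realises_def using sides_singleton_subset sides_card by blast

lemma realises_Red_target: "realises n h x (Red e) A B \<Longrightarrow> e \<subseteq> B \<and> card e = 2"
  unfolding realises_def using sides_singleton_subset sides_card by blast

lemma realises_Red_side:
  assumes "realises n h (Red e) y A B"
  obtains F where "F \<in> flatspaces n h" "e \<in> sides F"
  using assms unfolding realises_def by blast

lemma realises_Blue_Red: "realises n h (Blue T) y A B \<Longrightarrow> \<exists>e. y = Red e"
  unfolding realises_def by auto

lemma realises_rhombus_source:
  assumes "realises n h x y A B" "{A} \<notin> flatspaces n h"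
  obtains e1 e2 where "{A, B} \<in> flatspaces n h" "A \<noteq> B" "e1 \<in> sides {A, B}"
    "e1 \<subseteq> A" "e2 \<subseteq> B" "e2 \<in> sides {A, B}" "e1 \<inter> e2 = {}" "x = Red e1" "y = Red e2"
  using assms unfolding realises_def by blast

lemma realises_rhombus_target:
  assumes "realises n h x y A B" "{B} \<notin> flatspaces n h"
  obtains e1 e2 where "{A, B} \<in> flatspaces n h" "A \<noteq> B" "e1 \<in> sides {A, B}"
    "e1 \<subseteq> A" "e2 \<subseteq> B" "e2 \<in> sides {A, B}" "e1 \<inter> e2 = {}" "x = Red e1" "y = Red e2"
  using assms unfolding realises_def by blast

lemma card3_edge_complement:
  assumes "finite B" "card B = 3" "finite T" "card T = 3" "card (B \<inter> T) = 2"
    "e \<subseteq> T" "card e = 2" "e' \<subseteq> B" "e' \<inter> e = {}" "card e' = 2"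
  shows "e' = B - e"
proof -
  have "B \<inter> e \<noteq> {}"
  proof
    assume "B \<inter> e = {}"
    then have "e \<subseteq> T - B" using assms(6) by auto
    then have "card e \<le> card (T - B)" using assms(3) by (intro card_mono) auto
    also have "card (T - B) = 1"
      using assms(1-5) by (simp add: card_Diff_subset_Int Int_commute)
    finally show False using assms(7) by simp
  qed
  then have "card (B \<inter> e) \<ge> 1" using assms(1) by (simp add: card_gt_0_iff Suc_le_eq)
  then have "card (B - e) \<le> 2" using assms(1,2) by (simp add: card_Diff_subset_Int)
  moreover have "e' \<subseteq> B - e" using assms(8,9) by auto
  ultimately show ?thesis
    using assms(1,10) by (metis card_seteq finite_Diff)
qed

lemma realises_Red_backtrack:
  assumes shp: "small_flatspaces n h"
    and xe: "realises n h x (Red e) B T" and ez: "realises n h (Red e) z T A"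
  shows "x = z"
proof (cases "{T} \<in> flatspaces n h")
  case True
  then have "x = Blue T" "z = Blue T"
    using xe ez singleton_flatspace_rhombus[OF True] unfolding realises_def
    by (auto simp: insert_commute)
  then show ?thesis by simp
next
  case False
  obtain e1 where 1: "{B, T} \<in> flatspaces n h" "B \<noteq> T" "e1 \<subseteq> B" "e1 \<in> sides {B, T}"
      "e \<subseteq> T" "e \<in> sides {B, T}" "e1 \<inter> e = {}" "x = Red e1"
    using realises_rhombus_target[OF xe False] by (metis gvert.inject(2))
  obtain e2 where 2: "{T, A} \<in> flatspaces n h" "e2 \<subseteq> A" "e2 \<in> sides {T, A}" "e \<inter> e2 = {}"
      "z = Red e2"
    using realises_rhombus_source[OF ez False] by (metis gvert.inject(2))
  have "{B, T} = {T, A}" using flatspace_unique[OF 1(1) 2(1), of T] by simp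
  then have A: "A = B" using 1(2) by (auto simp: doubleton_eq_iff)
  have tris: "B \<in> small_tris n" "T \<in> small_tris n" using 1(1) flatspace_small_tri by blast+
  have BT: "finite B" "card B = 3" "finite T" "card T = 3" "card (B \<inter> T) = 2"
    using small_tri_finite_card[OF tris(1)] small_tri_finite_card[OF tris(2)]
      rhombus_flatspace_card_inter[OF shp 1(1,2)] by auto
  have "e1 = B - e"
    by (rule card3_edge_complement[OF BT 1(5) sides_card[OF 1(6)] 1(3,7) sides_card[OF 1(4)]])
  moreover have "e2 = B - e"
    using card3_edge_complement[OF BT 1(5) sides_card[OF 1(6)] 2(2)[unfolded A] _ sides_card[OF 2(3)]] 2(4)
    by (simp add: Int_commute)
  ultimately show ?thesis using 1(8) 2(5) by simp
qed

lemma realises_distinct_flatspace: "realises n h x y A B \<Longrightarrow> A \<noteq> B \<Longrightarrow> {A, B} \<in> flatspaces n h"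
  unfolding realises_def by auto

lemma rhombus_opposite_side:
  assumes "distinct [a1, a2, o1, o2]" "e \<subseteq> {a2, o1, o2}" "e \<inter> {a1, o1} = {}" "card e = 2"
  shows "e = {a2, o2}"
proof -
  have "e \<subseteq> {a2, o2}" using assms(2,3) by auto
  moreover have "card {a2, o2} = 2" using assms(1) by simp
  ultimately show ?thesis using assms(4) by (metis card_seteq finite.emptyI finite_insert order_refl)
qed

lemma realises_rhombus_opposite_source:
  assumes r: "realises n h (Red {a1, o1}) y T1 B"
    and R: "{T1, T2} \<in> flatspaces n h" "T1 = {a1, o1, o2}" "T2 = {a2, o1, o2}" "distinct [a1, a2, o1, o2]"
  shows "B = T2" "y = Red {a2, o2}"
proof -
  have "{T1} \<notin> flatspaces n h" using singleton_flatspace_rhombus R by force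
  then obtain e1 e2 where e: "{T1, B} \<in> flatspaces n h" "T1 \<noteq> B" "e2 \<subseteq> B" "e2 \<in> sides {T1, B}"
      "e1 \<inter> e2 = {}" "Red {a1, o1} = Red e1" "y = Red e2"
    by (rule realises_rhombus_source[OF r])
  have "{T1, B} = {T1, T2}" using flatspace_unique[OF e(1) R(1), of T1] by simp
  then show B: "B = T2" using e(2) by (auto simp: doubleton_eq_iff)
  have "e2 = {a2, o2}"
  proof (rule rhombus_opposite_side[OF R(4)])
    show "e2 \<subseteq> {a2, o1, o2}" using e(3) B R(3) by simp
    show "e2 \<inter> {a1, o1} = {}" using e(5,6) by auto
    show "card e2 = 2" by (rule sides_card[OF e(4)])
  qed
  then show "y = Red {a2, o2}" using e(7) by simp
qed

lemma realises_rhombus_opposite_target: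
  assumes r: "realises n h x (Red {a1, o1}) A T1"
    and R: "{T1, T2} \<in> flatspaces n h" "T1 = {a1, o1, o2}" "T2 = {a2, o1, o2}" "distinct [a1, a2, o1, o2]"
  shows "A = T2" "x = Red {a2, o2}"
proof -
  have "{T1} \<notin> flatspaces n h" using singleton_flatspace_rhombus R by force
  then obtain e1 e2 where e: "{A, T1} \<in> flatspaces n h" "A \<noteq> T1" "e1 \<in> sides {A, T1}" "e1 \<subseteq> A"
      "e1 \<inter> e2 = {}" "x = Red e1" "Red {a1, o1} = Red e2"
    by (rule realises_rhombus_target[OF r])
  have "{A, T1} = {T1, T2}" using flatspace_unique[OF e(1) R(1), of T1] by simp
  then show A: "A = T2" using e(2) by (auto simp: doubleton_eq_iff)
  have "e1 = {a2, o2}"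
  proof (rule rhombus_opposite_side[OF R(4)])
    show "e1 \<subseteq> {a2, o1, o2}" using e(4) A R(3) by simp
    show "e1 \<inter> {a1, o1} = {}" using e(5,7) by auto
    show "card e1 = 2" by (rule sides_card[OF e(3)])
  qed
  then show "x = Red {a2, o2}" using e(6) by simp
qed

section \<open>The closed walk of a cycle in the associated graph\<close>

locale assoc_graph_cycle =
  fixes n :: nat and h :: "nat \<times> nat \<Rightarrow> real" and vs :: "gvert list"
  assumes small_flatspaces: "small_flatspaces n h"
    and cycle: "is_cycle (assoc_graph_edges n h) vs"
begin

abbreviation "m \<equiv> length vs"

definition cyc_succ :: "nat \<Rightarrow> nat" where
  "cyc_succ k = Suc k mod m"

definition cyc_pred :: "nat \<Rightarrow> nat" where
  "cyc_pred k = (k + m - 1) mod m"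

lemma length_ge_3: "3 \<le> m" and distinct_vs: "distinct vs"
  using cycle by (auto simp: is_cycle_def)

lemma cycle_edge: "k < m \<Longrightarrow> {vs ! k, vs ! cyc_succ k} \<in> assoc_graph_edges n h"
  using cycle by (auto simp: is_cycle_def cyc_succ_def)

lemma length_pos: "0 < m"
  using length_ge_3 by linarith

lemma cyc_succ_less: "cyc_succ k < m" and cyc_pred_less: "cyc_pred k < m"
  using length_pos by (simp_all add: cyc_succ_def cyc_pred_def)

lemma cyc_succ_pred: "k < m \<Longrightarrow> cyc_succ (cyc_pred k) = k"
proof -
  assume "k < m"
  moreover have "Suc (k + m - 1) = k + m" using length_ge_3 by simp
  ultimately show ?thesis by (simp add: cyc_succ_def cyc_pred_def mod_Suc_eq)
qed

lemma cyc_pred_succ: "k < m \<Longrightarrow> cyc_pred (cyc_succ k) = k"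
proof -
  assume k: "k < m"
  show ?thesis
  proof (cases "Suc k < m")
    case True
    then show ?thesis using k by (simp add: cyc_succ_def cyc_pred_def)
  next
    case False
    then have "Suc k = m" using k by simp
    then show ?thesis by (simp add: cyc_succ_def cyc_pred_def)
  qed
qed

lemma cyc_pred_ne_succ: "k < m \<Longrightarrow> cyc_pred k \<noteq> cyc_succ k"
proof
  assume k: "k < m" and eq: "cyc_pred k = cyc_succ k"
  have "k = cyc_succ (cyc_succ k)" using cyc_succ_pred[OF k] eq by simp
  also have "\<dots> = Suc (Suc k) mod m" by (simp add: cyc_succ_def mod_Suc_eq)
  finally have "k = Suc (Suc k) mod m" .
  moreover have "Suc (Suc k) mod m = Suc (Suc k) - m" if "m \<le> Suc (Suc k)"
  proof -
    have "Suc (Suc k) - m < m" using k length_ge_3 by arith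
    then show ?thesis using that by (simp add: le_mod_geq)
  qed
  ultimately show False
    using k length_ge_3 by (cases "Suc (Suc k) < m") auto
qed

definition step :: "nat \<Rightarrow> (nat \<times> nat) set \<times> (nat \<times> nat) set" where
  "step k = (SOME P. realises n h (vs ! k) (vs ! cyc_succ k) (fst P) (snd P))"

definition step_src :: "nat \<Rightarrow> (nat \<times> nat) set" where
  "step_src k = fst (step k)"

definition step_dst :: "nat \<Rightarrow> (nat \<times> nat) set" where
  "step_dst k = snd (step k)"

lemma realises_step: "k < m \<Longrightarrow> realises n h (vs ! k) (vs ! cyc_succ k) (step_src k) (step_dst k)"
proof -
  assume "k < m"
  then obtain A B where "realises n h (vs ! k) (vs ! cyc_succ k) A B"
    using assoc_graph_edge_realised[OF cycle_edge] by blast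
  then have "\<exists>P. realises n h (vs ! k) (vs ! cyc_succ k) (fst P) (snd P)" by auto
  then show ?thesis unfolding step_src_def step_dst_def step_def by (rule someI_ex)
qed

lemma realises_step_into:
  assumes "k < m"
  shows "realises n h (vs ! cyc_pred k) (vs ! k) (step_src (cyc_pred k)) (step_dst (cyc_pred k))"
  using realises_step[OF cyc_pred_less, of k] cyc_succ_pred[OF assms] by simp

lemma step_small_tris:
  assumes "k < m"
  shows "step_src k \<in> small_tris n" "step_dst k \<in> small_tris n"
    "step_src k = step_dst k \<or> card (step_src k \<inter> step_dst k) = 2"
  using realises_small_tris[OF small_flatspaces realises_step[OF assms]] by blast+

lemma step_dst_src_adjacent:
  assumes "i < m"
  shows "step_dst i = step_src (cyc_succ i) \<or> card (step_dst i \<inter> step_src (cyc_succ i)) = 2"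
proof (cases "vs ! cyc_succ i")
  case (Blue T)
  then show ?thesis
    using realises_Blue_target[of n h _ T] realises_Blue_source[of n h T]
      realises_step[OF assms] realises_step[OF cyc_succ_less] by metis
next
  case (Red e)
  then have e: "e \<subseteq> step_dst i" "e \<subseteq> step_src (cyc_succ i)" "card e = 2"
    using realises_Red_target realises_Red_source realises_step[OF assms]
      realises_step[OF cyc_succ_less] by metis+
  obtain u v where uv: "e = {u, v}" "u \<noteq> v" using e(3) by (auto simp: card_2_iff)
  show ?thesis
  proof (cases "step_dst i = step_src (cyc_succ i)")
    case False
    then have "step_dst i \<inter> step_src (cyc_succ i) = {u, v}"
      using small_tris_common_edge(1)[OF step_small_tris(2)[OF assms]
          step_small_tris(1)[OF cyc_succ_less] False uv(2)] e uv(1) by simp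
    then show ?thesis using uv(2) by simp
  qed simp
qed

text \<open>The closed walk of small triangles traced out by the cycle: at the \<open>i\<close>-th cycle vertex it
  steps from \<open>step_dst (i - 1)\<close> to \<open>step_src i\<close>, and along the \<open>i\<close>-th cycle edge from
  \<open>step_src i\<close> to \<open>step_dst i\<close>.\<close>
definition tri_walk :: "nat \<Rightarrow> (nat \<times> nat) set" where
  "tri_walk j = (if even j then step_src (j div 2 mod m) else step_dst (j div 2 mod m))"

lemma tri_walk_even: "tri_walk (2 * i) = step_src (i mod m)"
  by (simp add: tri_walk_def)

lemma tri_walk_odd: "tri_walk (Suc (2 * i)) = step_dst (i mod m)"
  by (simp add: tri_walk_def)

lemma tri_walk_odd_Suc: "tri_walk (Suc (Suc (2 * i))) = step_src (cyc_succ (i mod m))"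
  using tri_walk_even[of "Suc i"] by (simp add: cyc_succ_def mod_Suc_eq)

lemma closed_walk_tri_walk: "closed_walk n tri_walk (2 * m)"
  unfolding closed_walk_def
proof (intro conjI allI)
  fix j :: nat
  define i where "i = j div 2"
  have j: "j = 2 * i \<or> j = Suc (2 * i)" unfolding i_def by presburger
  have i: "i mod m < m" using length_pos by simp
  show "tri_walk j \<in> small_tris n"
    using j step_small_tris[OF i] by (auto simp: tri_walk_even tri_walk_odd)
  show "tri_walk j = tri_walk (Suc j) \<or> card (tri_walk j \<inter> tri_walk (Suc j)) = 2"
    using j step_small_tris(3)[OF i] step_dst_src_adjacent[OF i]
    by (auto simp: tri_walk_even tri_walk_odd tri_walk_odd_Suc)
next
  show "tri_walk (2 * m) = tri_walk 0"
    using tri_walk_even[of m] tri_walk_even[of 0] by simp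
qed

lemma crossings_tri_walk:
  "crossings tri_walk (2 * m) u v =
     (\<Sum>i<m. crossing (step_src i) (step_dst i) u v + crossing (step_dst i) (step_src (cyc_succ i)) u v)"
proof -
  have "{..<2 * m} = {..Suc (2 * (m - 1))}" "{..m - 1} = {..<m}" using length_ge_3 by auto
  then have "crossings tri_walk (2 * m) u v =
      (\<Sum>i<m. crossing (tri_walk (2 * i)) (tri_walk (Suc (2 * i))) u v
        + crossing (tri_walk (Suc (2 * i))) (tri_walk (Suc (Suc (2 * i)))) u v)"
    unfolding crossings_def by (simp only: sum.in_pairs_0)
  also have "\<dots> = (\<Sum>i<m. crossing (step_src i) (step_dst i) u v
        + crossing (step_dst i) (step_src (cyc_succ i)) u v)"
    by (intro sum.cong) (simp_all add: tri_walk_even tri_walk_odd tri_walk_odd_Suc)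
  finally show ?thesis .
qed

lemma crossing_step_side:
  assumes "F \<in> flatspaces n h" "{u, v} \<in> sides F" "u \<noteq> v" "i < m"
  shows "crossing (step_src i) (step_dst i) u v = 0"
proof (rule ccontr)
  let ?A = "step_src i" and ?B = "step_dst i"
  assume "crossing ?A ?B u v \<noteq> 0"
  then have AB: "?A \<noteq> ?B" "?A \<inter> ?B = {u, v}" by (auto simp: crossing_def split: if_splits)
  have flat: "{?A, ?B} \<in> flatspaces n h"
    by (rule realises_distinct_flatspace[OF realises_step[OF assms(4)] AB(1)])
  obtain T where T: "T \<in> F" "{u, v} \<subseteq> T" using assms(2) by (auto simp: sides_def)
  have "T = ?A \<or> T = ?B"
    using small_tris_edge_shared_by_two[OF step_small_tris(1,2)[OF assms(4)]
        flatspace_small_tri[OF assms(1) T(1)] assms(3)] AB T(2) by auto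
  then have "F = {?A, ?B}" using flatspace_unique[OF assms(1) flat] T(1) by blast
  then show False using assms(2) AB unfolding sides_def by auto
qed

lemma crossing_at_vertex_Red:
  assumes "i < m" "crossing (step_dst i) (step_src (cyc_succ i)) u v \<noteq> 0"
  shows "vs ! cyc_succ i = Red {u, v}"
proof -
  let ?B = "step_dst i" and ?A = "step_src (cyc_succ i)"
  have AB: "?B \<noteq> ?A" "?B \<inter> ?A = {u, v}"
    using assms(2) by (auto simp: crossing_def split: if_splits)
  show ?thesis
  proof (cases "vs ! cyc_succ i")
    case (Blue T)
    then have "?B = T" "?A = T"
      using realises_Blue_target realises_step[OF assms(1)]
        realises_Blue_source realises_step[OF cyc_succ_less] by metis+
    then show ?thesis using AB(1) by simp
  next
    case (Red e)
    then have e: "e \<subseteq> ?B" "e \<subseteq> ?A" "card e = 2"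
      using realises_Red_target realises_step[OF assms(1)]
        realises_Red_source realises_step[OF cyc_succ_less] by metis+
    then have "e \<subseteq> {u, v}" using AB(2) by auto
    moreover have "card {u, v} \<le> card e" using e(3) by (simp add: card_insert_if)
    ultimately have "e = {u, v}" by (intro card_seteq) auto
    then show ?thesis using Red by simp
  qed
qed

lemma crossings_side:
  assumes "F \<in> flatspaces n h" "{u, v} \<in> sides F" "u \<noteq> v"
  shows "crossings tri_walk (2 * m) u v =
    (\<Sum>i<m. if vs ! cyc_succ i = Red {u, v} then crossing (step_dst i) (step_src (cyc_succ i)) u v else 0)"
  unfolding crossings_tri_walk
proof (intro sum.cong refl)
  fix i
  assume "i \<in> {..<m}"
  then show "crossing (step_src i) (step_dst i) u v + crossing (step_dst i) (step_src (cyc_succ i)) u v =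
    (if vs ! cyc_succ i = Red {u, v} then crossing (step_dst i) (step_src (cyc_succ i)) u v else 0)"
    using crossing_step_side[OF assms, of i] crossing_at_vertex_Red[of i u v] by auto
qed

lemma crossings_side_not_in_cycle:
  assumes "F \<in> flatspaces n h" "{u, v} \<in> sides F" "u \<noteq> v" "Red {u, v} \<notin> set vs"
  shows "crossings tri_walk (2 * m) u v = 0"
proof -
  have "vs ! cyc_succ i \<noteq> Red {u, v}" for i
    using nth_mem[OF cyc_succ_less, of i] assms(4) by auto
  then show ?thesis unfolding crossings_side[OF assms(1-3)] by simp
qed

lemma crossings_side_in_cycle:
  assumes "F \<in> flatspaces n h" "{u, v} \<in> sides F" "u \<noteq> v" "k < m" "vs ! k = Red {u, v}"
  shows "crossings tri_walk (2 * m) u v = crossing (step_dst (cyc_pred k)) (step_src k) u v"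
proof -
  have "vs ! cyc_succ i = Red {u, v} \<longleftrightarrow> i = cyc_pred k" if "i < m" for i
    using nth_eq_iff_index_eq[OF distinct_vs cyc_succ_less assms(4)] assms(4,5)
      cyc_pred_succ[OF that] cyc_succ_pred[OF assms(4)] by auto
  then have "crossings tri_walk (2 * m) u v =
      (\<Sum>i<m. if i = cyc_pred k then crossing (step_dst i) (step_src (cyc_succ i)) u v else 0)"
    unfolding crossings_side[OF assms(1-3)] by (intro sum.cong) auto
  also have "\<dots> = crossing (step_dst (cyc_pred k)) (step_src k) u v"
    using cyc_pred_less cyc_succ_pred[OF assms(4)] by (simp add: sum.delta)
  finally show ?thesis .
qed

text \<open>This is where a cycle needs at least three vertices: otherwise the walk could cross the
  edge of a red vertex and return at once.\<close>
lemma step_dst_pred_ne_src: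
  assumes "k < m" "vs ! k = Red e"
  shows "step_dst (cyc_pred k) \<noteq> step_src k"
proof
  assume eq: "step_dst (cyc_pred k) = step_src k"
  have "vs ! cyc_pred k = vs ! cyc_succ k"
    using realises_Red_backtrack[OF small_flatspaces] realises_step_into[OF assms(1)]
      realises_step[OF assms(1)] assms(2) eq by metis
  then show False
    using nth_eq_iff_index_eq[OF distinct_vs cyc_pred_less cyc_succ_less] cyc_pred_ne_succ[OF assms(1)]
    by blast
qed

lemma crossings_side_orient:
  assumes "F \<in> flatspaces n h" "{u, v} \<in> sides F" "u \<noteq> v" "k < m" "vs ! k = Red {u, v}"
  shows "crossings tri_walk (2 * m) u v = orient (step_dst (cyc_pred k)) u v"
    "crossings tri_walk (2 * m) u v = - orient (step_src k) u v"
    "\<bar>orient (step_src k) u v\<bar> = 1"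
proof -
  let ?B = "step_dst (cyc_pred k)" and ?A = "step_src k"
  have ne: "?B \<noteq> ?A" by (rule step_dst_pred_ne_src[OF assms(4,5)])
  have sub: "{u, v} \<subseteq> ?B" "{u, v} \<subseteq> ?A"
    using realises_Red_target[OF realises_step_into[OF assms(4), unfolded assms(5)]]
      realises_Red_source[OF realises_step[OF assms(4), unfolded assms(5)]] by auto
  note edge = small_tris_common_edge[OF step_small_tris(2)[OF cyc_pred_less]
      step_small_tris(1)[OF assms(4)] ne assms(3) sub]
  have "crossings tri_walk (2 * m) u v = orient ?B u v"
    using crossings_side_in_cycle[OF assms] ne edge(1) by (simp add: crossing_def)
  then show "crossings tri_walk (2 * m) u v = orient ?B u v"
    "crossings tri_walk (2 * m) u v = - orient ?A u v" "\<bar>orient ?A u v\<bar> = 1"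
    using edge(2,3) by auto
qed

text \<open>The red vertex of a side of a rhombus flatspace is joined in the cycle to the red vertex of
  the opposite side, so the walk crosses the rhombus from one side to the other.\<close>
lemma rhombus_crossings_cancel_at:
  assumes R: "{T1, T2} \<in> flatspaces n h" "T1 = {a1, o1, o2}" "T2 = {a2, o1, o2}"
    "distinct [a1, a2, o1, o2]" "orient T1 a1 o1 = orient T2 a2 o2"
    and k: "k < m" "vs ! k = Red {a1, o1}"
  shows "crossings tri_walk (2 * m) a1 o1 + crossings tri_walk (2 * m) a2 o2 = 0"
proof -
  have sides: "{a1, o1} \<in> sides {T1, T2}" "{a2, o2} \<in> sides {T1, T2}"
    using rhombus_sides[OF R(4)] R(2,3) by simp_all
  have ao: "a1 \<noteq> o1" "a2 \<noteq> o2" using R(4) by auto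
  note crossings1 = crossings_side_orient[OF R(1) sides(1) ao(1) k]
  have into: "realises n h (vs ! cyc_pred k) (Red {a1, o1}) (step_src (cyc_pred k)) (step_dst (cyc_pred k))"
    and out: "realises n h (Red {a1, o1}) (vs ! cyc_succ k) (step_src k) (step_dst k)"
    using realises_step_into[OF k(1)] realises_step[OF k(1)] k(2) by simp_all
  have "{a1, o1} \<subseteq> step_dst (cyc_pred k)" "{a1, o1} \<subseteq> step_src k" "{a1, o1} \<subseteq> T1"
    using realises_Red_target[OF into] realises_Red_source[OF out] R(2) by auto
  then have "T1 = step_src k \<or> T1 = step_dst (cyc_pred k)"
    using small_tris_edge_shared_by_two[OF step_small_tris(2)[OF cyc_pred_less]
        step_small_tris(1)[OF k(1)] flatspace_small_tri[OF R(1)] ao(1)]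
      step_dst_pred_ne_src[OF k] by auto
  then show ?thesis
  proof
    assume T1: "T1 = step_src k"
    have "step_dst k = T2" "vs ! cyc_succ k = Red {a2, o2}"
      using realises_rhombus_opposite_source[OF out[folded T1] R(1-4)] by simp_all
    then have "crossings tri_walk (2 * m) a2 o2 = orient T2 a2 o2"
      using crossings_side_orient(1)[OF R(1) sides(2) ao(2) cyc_succ_less] cyc_pred_succ[OF k(1)]
      by simp
    then show ?thesis using crossings1(2) T1 R(5) by simp
  next
    assume T1: "T1 = step_dst (cyc_pred k)"
    have "step_src (cyc_pred k) = T2" "vs ! cyc_pred k = Red {a2, o2}"
      using realises_rhombus_opposite_target[OF into[folded T1] R(1-4)] by simp_all
    then have "crossings tri_walk (2 * m) a2 o2 = - orient T2 a2 o2"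
      using crossings_side_orient(2)[OF R(1) sides(2) ao(2) cyc_pred_less] by simp
    then show ?thesis using crossings1(1) T1 R(5) by simp
  qed
qed

lemma rhombus_crossings_cancel:
  assumes R: "{T1, T2} \<in> flatspaces n h" "T1 = {a1, o1, o2}" "T2 = {a2, o1, o2}"
    "distinct [a1, a2, o1, o2]" "orient T1 a1 o1 = orient T2 a2 o2"
  shows "crossings tri_walk (2 * m) a1 o1 + crossings tri_walk (2 * m) a2 o2 = 0"
proof (cases "Red {a1, o1} \<in> set vs")
  case True
  then obtain k where "k < m" "vs ! k = Red {a1, o1}" by (metis in_set_conv_nth)
  then show ?thesis by (rule rhombus_crossings_cancel_at[OF R])
next
  case not1: False
  show ?thesis
  proof (cases "Red {a2, o2} \<in> set vs")
    case True
    then obtain k where k: "k < m" "vs ! k = Red {a2, o2}" by (metis in_set_conv_nth)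
    have "{T2, T1} \<in> flatspaces n h" "T2 = {a2, o2, o1}" "T1 = {a1, o2, o1}"
      "distinct [a2, a1, o2, o1]" "orient T2 a2 o2 = orient T1 a1 o1"
      using R by (auto simp: insert_commute)
    from rhombus_crossings_cancel_at[OF this k] show ?thesis by simp
  next
    case False
    have "{a1, o1} \<in> sides {T1, T2}" "{a2, o2} \<in> sides {T1, T2}"
      using rhombus_sides[OF R(4)] R(2,3) by simp_all
    then show ?thesis
      using crossings_side_not_in_cycle[OF R(1) _ _ not1] crossings_side_not_in_cycle[OF R(1) _ _ False] R(4)
      by simp
  qed
qed

lemma Red_vertex_in_cycle:
  obtains k e where "k < m" "vs ! k = Red e"
proof (cases "vs ! 0")
  case (Red e)
  then show thesis using that length_pos by blast
next
  case (Blue T)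
  then obtain e where "vs ! cyc_succ 0 = Red e"
    using realises_Blue_Red realises_step[OF length_pos] by metis
  then show thesis using that cyc_succ_less by blast
qed

lemma potential_tri_walk_nonzero: "\<exists>x. potential n tri_walk (2 * m) x \<noteq> 0"
proof -
  obtain k e where k: "k < m" "vs ! k = Red e" by (rule Red_vertex_in_cycle)
  have out: "realises n h (Red e) (vs ! cyc_succ k) (step_src k) (step_dst k)"
    using realises_step[OF k(1)] k(2) by simp
  obtain F where F: "F \<in> flatspaces n h" "e \<in> sides F" by (rule realises_Red_side[OF out])
  obtain u v where uv: "e = {u, v}" "u \<noteq> v" using sides_card[OF F(2)] by (auto simp: card_2_iff)
  have "crossings tri_walk (2 * m) u v \<noteq> 0"
    using crossings_side_orient(2,3)[OF F(1) _ uv(2) k(1)] F(2) k(2) uv(1) by auto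
  moreover have "potential n tri_walk (2 * m) v - potential n tri_walk (2 * m) u = crossings tri_walk (2 * m) u v"
    using potential_diff[OF closed_walk_tri_walk step_small_tris(1)[OF k(1)]] realises_Red_source[OF out] uv(1)
    by auto
  ultimately have "potential n tri_walk (2 * m) u \<noteq> 0 \<or> potential n tri_walk (2 * m) v \<noteq> 0"
    by auto
  then show ?thesis by blast
qed

lemma potential_flat_rhombus:
  assumes T: "{a1, o1, o2} \<in> small_tris n" "{a2, o1, o2} \<in> small_tris n"
    and d: "distinct [a1, a2, o1, o2]" and cross: "cross3 a1 o1 o2 = cross3 a2 o2 o1"
    and flat: "h o1 + h o2 = h a1 + h a2"
  shows "potential n tri_walk (2 * m) o1 + potential n tri_walk (2 * m) o2
       = potential n tri_walk (2 * m) a1 + potential n tri_walk (2 * m) a2"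
proof -
  let ?T1 = "{a1, o1, o2}" and ?T2 = "{a2, o1, o2}"
  have "?T1 \<inter> ?T2 = {o1, o2}" "(?T1 \<union> ?T2) - (?T1 \<inter> ?T2) = {a1, a2}" using d by auto
  then have "flat_adj n h ?T1 ?T2" using T d flat unfolding flat_adj_def by simp
  then have "{?T1, ?T2} \<in> flatspaces n h"
    using flat_adj_flatspace[OF small_flatspaces] d by auto
  moreover have "orient ?T1 a1 o1 = orient ?T2 a2 o2"
  proof -
    have "orient ?T1 a1 o1 = cross3 a1 o1 o2" using d by (intro orient_triangle) auto
    also have "\<dots> = cross3 a2 o2 o1" by (rule cross)
    also have "\<dots> = orient {a2, o2, o1} a2 o2" using d by (intro orient_triangle[symmetric]) auto
    also have "{a2, o2, o1} = ?T2" by auto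
    finally show ?thesis .
  qed
  ultimately have "crossings tri_walk (2 * m) a1 o1 + crossings tri_walk (2 * m) a2 o2 = 0"
    using rhombus_crossings_cancel d by blast
  moreover have "potential n tri_walk (2 * m) o1 - potential n tri_walk (2 * m) a1 = crossings tri_walk (2 * m) a1 o1"
    "potential n tri_walk (2 * m) o2 - potential n tri_walk (2 * m) a2 = crossings tri_walk (2 * m) a2 o2"
    using potential_diff[OF closed_walk_tri_walk T(1)] potential_diff[OF closed_walk_tri_walk T(2)] by auto
  ultimately show ?thesis by linarith
qed

end

section \<open>Rhombus inequalities and extremality\<close>

definition rhombus_slack :: "(nat \<times> nat \<Rightarrow> real) \<Rightarrow> nat \<times> nat \<times> nat \<Rightarrow> real" where
  "rhombus_slack g i = (case i of (p, q, k) \<Rightarrow>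
     if k = 0 then g (Suc p, q) + g (p, Suc q) - g (p, q) - g (Suc p, Suc q)
     else if k = 1 then g (Suc p, q) + g (Suc p, Suc q) - g (p, Suc q) - g (Suc (Suc p), q)
     else g (p, Suc q) + g (Suc p, Suc q) - g (Suc p, q) - g (p, Suc (Suc q)))"

definition rhombus_index :: "nat \<Rightarrow> (nat \<times> nat \<times> nat) set" where
  "rhombus_index n = {(p, q, k). p + q + 2 \<le> n \<and> k < 3}"

lemma finite_rhombus_index: "finite (rhombus_index n)"
proof -
  have "rhombus_index n \<subseteq> {..n} \<times> {..n} \<times> {..<3}" by (auto simp: rhombus_index_def)
  then show ?thesis by (rule finite_subset) auto
qed

lemma is_hive_iff_rhombus_slack: "is_hive n g \<longleftrightarrow> (\<forall>i\<in>rhombus_index n. 0 \<le> rhombus_slack g i)"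
proof -
  have three: "(\<forall>k<3. Q k) \<longleftrightarrow> Q 0 \<and> Q 1 \<and> Q 2" for Q :: "nat \<Rightarrow> bool"
    by (auto simp: less_Suc_eq numeral_3_eq_3 numeral_2_eq_2)
  have slack: "0 \<le> rhombus_slack g (p, q, 0) \<longleftrightarrow> g (p + 1, q) + g (p, q + 1) \<ge> g (p, q) + g (p + 1, q + 1)"
    "0 \<le> rhombus_slack g (p, q, 1) \<longleftrightarrow> g (p + 1, q) + g (p + 1, q + 1) \<ge> g (p, q + 1) + g (p + 2, q)"
    "0 \<le> rhombus_slack g (p, q, 2) \<longleftrightarrow> g (p, q + 1) + g (p + 1, q + 1) \<ge> g (p + 1, q) + g (p, q + 2)"
    for p q by (auto simp: rhombus_slack_def numeral_2_eq_2)
  have "(\<forall>i\<in>rhombus_index n. 0 \<le> rhombus_slack g i) \<longleftrightarrow>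
      (\<forall>p q. p + q + 2 \<le> n \<longrightarrow> (\<forall>k<3. 0 \<le> rhombus_slack g (p, q, k)))"
    by (auto simp: rhombus_index_def)
  then show ?thesis unfolding is_hive_def three slack by simp
qed

lemma rhombus_slack_add_scaled: "rhombus_slack (\<lambda>x. g x + t * f x) i = rhombus_slack g i + t * rhombus_slack f i"
  by (cases i) (auto simp: rhombus_slack_def algebra_simps)

lemma rhombus_slack_shape:
  assumes "i \<in> rhombus_index n"
  obtains o1 o2 a1 a2 where "\<And>g. rhombus_slack g i = g o1 + g o2 - g a1 - g a2"
    "{a1, o1, o2} \<in> small_tris n" "{a2, o1, o2} \<in> small_tris n" "distinct [a1, a2, o1, o2]"
    "cross3 a1 o1 o2 = cross3 a2 o2 o1"
proof -
  obtain p q k where i: "i = (p, q, k)" "p + q + 2 \<le> n" "k < 3"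
    using assms by (auto simp: rhombus_index_def)
  have up: "up_tri p q \<in> small_tris n" "up_tri (Suc p) q \<in> small_tris n" "up_tri p (Suc q) \<in> small_tris n"
    and down: "down_tri p q \<in> small_tris n"
    using i(2) by (auto intro: up_tri_in_small_tris down_tri_in_small_tris)
  consider "k = 0" | "k = 1" | "k = 2" using i(3) by linarith
  then show thesis
  proof cases
    case 1
    have "up_tri p q = {(p, q), (Suc p, q), (p, Suc q)}"
      "down_tri p q = {(Suc p, Suc q), (Suc p, q), (p, Suc q)}" by (auto simp: up_tri_def down_tri_def)
    then show thesis
      using that[of "(Suc p, q)" "(p, Suc q)" "(p, q)" "(Suc p, Suc q)"] i 1 up down
      by (simp add: rhombus_slack_def cross3_def)
  next
    case 2
    have "down_tri p q = {(p, Suc q), (Suc p, q), (Suc p, Suc q)}"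
      "up_tri (Suc p) q = {(Suc (Suc p), q), (Suc p, q), (Suc p, Suc q)}" by (auto simp: up_tri_def down_tri_def)
    then show thesis
      using that[of "(Suc p, q)" "(Suc p, Suc q)" "(p, Suc q)" "(Suc (Suc p), q)"] i 2 up down
      by (simp add: rhombus_slack_def cross3_def)
  next
    case 3
    have "down_tri p q = {(Suc p, q), (p, Suc q), (Suc p, Suc q)}"
      "up_tri p (Suc q) = {(p, Suc (Suc q)), (p, Suc q), (Suc p, Suc q)}" by (auto simp: up_tri_def down_tri_def)
    then show thesis
      using that[of "(p, Suc q)" "(Suc p, Suc q)" "(Suc p, q)" "(p, Suc (Suc q))"] i 3 up down
      by (simp add: rhombus_slack_def cross3_def)
  qed
qed

lemma finite_uniform_margin:
  fixes s c :: "'a \<Rightarrow> real"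
  assumes "finite I" "\<And>i. i \<in> I \<Longrightarrow> 0 \<le> s i" "\<And>i. i \<in> I \<Longrightarrow> s i = 0 \<Longrightarrow> c i = 0"
  obtains \<epsilon> where "0 < \<epsilon>" "\<And>i. i \<in> I \<Longrightarrow> \<epsilon> * \<bar>c i\<bar> \<le> s i"
proof -
  let ?R = "insert 1 ((\<lambda>i. s i / \<bar>c i\<bar>) ` {i \<in> I. c i \<noteq> 0})"
  have fin: "finite ?R" using assms(1) by simp
  have "0 < r" if "r \<in> ?R" for r
    using that assms(2,3) by (force intro: divide_pos_pos)
  then have "0 < Min ?R" using fin by simp
  moreover have "Min ?R * \<bar>c i\<bar> \<le> s i" if i: "i \<in> I" for i
  proof (cases "c i = 0")
    case True
    then show ?thesis using assms(2)[OF i] by simp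
  next
    case False
    then have "Min ?R \<le> s i / \<bar>c i\<bar>" using fin i by (intro Min_le) auto
    then show ?thesis using False by (simp add: pos_le_divide_eq)
  qed
  ultimately show thesis by (rule that)
qed

text \<open>Otherwise \<open>h \<plusminus> \<epsilon> f\<close> are hives with the border of \<open>h\<close> for small \<open>\<epsilon>\<close>, and \<open>h\<close> is their
  midpoint.\<close>
lemma extreme_hive_flat_perturbation:
  assumes extreme: "extreme_point_fun h (hives_with_border n h)"
    and border: "\<And>x. x \<in> hive_border n \<Longrightarrow> f x = 0"
    and outside: "\<And>x. x \<notin> hive_vertices n \<Longrightarrow> f x = 0"
    and flat: "\<And>i. i \<in> rhombus_index n \<Longrightarrow> rhombus_slack h i = 0 \<Longrightarrow> rhombus_slack f i = 0"
  shows "f = (\<lambda>_. 0)"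
proof (rule ccontr)
  assume "f \<noteq> (\<lambda>_. 0)"
  then obtain x where x: "f x \<noteq> 0" by (metis ext)
  have h: "h \<in> hives_with_border n h" using extreme by (simp add: extreme_point_fun_def)
  then have "0 \<le> rhombus_slack h i" if "i \<in> rhombus_index n" for i
    using that by (simp add: hives_with_border_def is_hive_iff_rhombus_slack)
  then obtain \<epsilon> where \<epsilon>: "0 < \<epsilon>" "\<And>i. i \<in> rhombus_index n \<Longrightarrow> \<epsilon> * \<bar>rhombus_slack f i\<bar> \<le> rhombus_slack h i"
    using finite_uniform_margin[OF finite_rhombus_index] flat by metis
  have mem: "(\<lambda>x. h x + t * f x) \<in> hives_with_border n h" if t: "\<bar>t\<bar> = \<epsilon>" for t
  proof -
    have "0 \<le> rhombus_slack h i + t * rhombus_slack f i" if "i \<in> rhombus_index n" for i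
    proof -
      have "\<bar>t * rhombus_slack f i\<bar> = \<epsilon> * \<bar>rhombus_slack f i\<bar>" using t by (simp add: abs_mult)
      then show ?thesis using \<epsilon>(2)[OF that] by linarith
    qed
    then show ?thesis
      using h border outside
      by (simp add: hives_with_border_def is_hive_iff_rhombus_slack rhombus_slack_add_scaled)
  qed
  let ?a = "\<lambda>x. h x + (- \<epsilon>) * f x" and ?b = "\<lambda>x. h x + \<epsilon> * f x"
  have no_midpoint: "h \<noteq> (\<lambda>i. (1 - t) * a i + t * b i)"
    if "a \<in> hives_with_border n h" "b \<in> hives_with_border n h" "a \<noteq> b" "0 < t" "t < 1" for a b t
    using extreme that unfolding extreme_point_fun_def by blast
  have "?a \<in> hives_with_border n h" "?b \<in> hives_with_border n h"
    using mem[of "- \<epsilon>"] mem[of \<epsilon>] \<epsilon>(1) by simp_all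
  moreover have "?a \<noteq> ?b" using fun_cong[of ?a ?b x] x \<epsilon>(1) by auto
  ultimately have "h \<noteq> (\<lambda>i. (1 - 1 / 2) * ?a i + 1 / 2 * ?b i)" by (rule no_midpoint) simp_all
  moreover have "h = (\<lambda>i. (1 - 1 / 2) * ?a i + 1 / 2 * ?b i)" by (auto simp: algebra_simps)
  ultimately show False by contradiction
qed

lemma (in assoc_graph_cycle) rhombus_slack_potential:
  assumes "i \<in> rhombus_index n" "rhombus_slack h i = 0"
  shows "rhombus_slack (potential n tri_walk (2 * m)) i = 0"
  using assms(1)
proof (rule rhombus_slack_shape)
  fix o1 o2 a1 a2
  assume "\<And>g. rhombus_slack g i = g o1 + g o2 - g a1 - g a2" "{a1, o1, o2} \<in> small_tris n"
    "{a2, o1, o2} \<in> small_tris n" "distinct [a1, a2, o1, o2]" "cross3 a1 o1 o2 = cross3 a2 o2 o1"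
  then show ?thesis using potential_flat_rhombus assms(2) by simp
qed

theorem lemma3p1:
  fixes n :: nat and h :: "nat \<times> nat \<Rightarrow> real"
  assumes "n \<ge> 1"
    and "is_hive n h"
    and "\<forall>F\<in>flatspaces n h. is_small_triangle n F \<or> is_small_rhombus n F"
    and "extreme_point_fun h (hives_with_border n h)"
  shows "acyclic_graph (assoc_graph_edges n h)"
proof (rule ccontr)
  assume "\<not> acyclic_graph (assoc_graph_edges n h)"
  then obtain vs where "is_cycle (assoc_graph_edges n h) vs" by (auto simp: acyclic_graph_def)
  moreover have "small_flatspaces n h" using assms(3) by (simp add: small_flatspaces_def)
  ultimately interpret assoc_graph_cycle n h vs by unfold_locales
  let ?f = "potential n tri_walk (2 * m)"
  have "?f = (\<lambda>_. 0)"
  proof (rule extreme_hive_flat_perturbation[OF assms(4)])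
    show "?f x = 0" if "x \<in> hive_border n" for x
      by (rule potential_border[OF closed_walk_tri_walk that])
    show "?f x = 0" if "x \<notin> hive_vertices n" for x
      by (rule potential_outside[OF that])
    show "rhombus_slack ?f i = 0" if "i \<in> rhombus_index n" "rhombus_slack h i = 0" for i
      by (rule rhombus_slack_potential[OF that])
  qed
  then show False using potential_tri_walk_nonzero by simp
qed

end
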